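(* Let $u,v$ be distinct points in the plane and $\gamma_1<\gamma_2$ angles such that the polar angle $\varphi(uv)$ of $\overrightarrow{uv}$ lies in $[\gamma_1,\gamma_2)$. Let $R=\overline{D(u,|uv|)\cap C_u(\gamma_1,\gamma_2)}$ (a closed sector with apex $u$ and with $v$ on its arc), and suppose $\alpha=\max\{\varphi(uv)-\gamma_1,\ \gamma_2-\varphi(uv)\}<\pi/3$. Then for every $w\in R\setminus\{u\}$, $$\frac{|uw|}{|uv|-|vw|}\leq\left(1-2\sin\frac{\alpha}{2}\right)^{-1}.$$
   Context: $D(a,\rho)$ is the open disk of center $a$ and radius $\rho$, and $\overline{X}$ denotes the closure of $X$. Polar angles are measured from the positive $x$-axis, modulo $2\pi$; $\varphi(uv)$ is the polar angle of the vector $\overrightarrow{uv}$. $C_u(\gamma_1,\gamma_2)$ is the set of points $w\neq u$ for which the polar angle of $\overrightarrow{uw}$ lies in $[\gamma_1,\gamma_2)$. *)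

theory Defs
  imports "HOL-Analysis.Analysis"
begin

text \<open>The plane is modelled by the complex numbers. The polar angle of the
vector from u to w (w \<noteq> u) is Arg (w - u), taken modulo 2 pi.\<close>

definition polar_angle :: "complex \<Rightarrow> complex \<Rightarrow> real" where
  "polar_angle u w = Arg (w - u)"

definition angle_in :: "real \<Rightarrow> real \<Rightarrow> real \<Rightarrow> bool" where
  "angle_in \<theta> g1 g2 \<longleftrightarrow> (\<exists>k::int. g1 \<le> \<theta> + 2 * pi * of_int k \<and> \<theta> + 2 * pi * of_int k < g2)"

definition cone :: "complex \<Rightarrow> real \<Rightarrow> real \<Rightarrow> complex set" where
  "cone u g1 g2 = {w. w \<noteq> u \<and> angle_in (polar_angle u w) g1 g2}"

end

theory Submission
  imports Defs
begin

text \<open>Put \<open>r = |uw|\<close>, \<open>d = |uv|\<close> and let \<open>p\<close> be the point of the segment \<open>uv\<close> with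
\<open>|up| = r\<close>. The chord \<open>pw\<close> of the circle of radius \<open>r\<close> about \<open>u\<close> subtends an angle of
at most \<open>\<alpha>\<close>, so \<open>|pw| \<le> 2 r sin (\<alpha>/2)\<close>, and this closed condition persists on the closure
of the sector. The triangle inequality through \<open>p\<close> gives
\<open>|vw| \<le> (d - r) + 2 r sin (\<alpha>/2)\<close>, i.e. \<open>r (1 - 2 sin (\<alpha>/2)) \<le> d - |vw|\<close>; the
factor is positive because \<open>\<alpha> < \<pi>/3\<close>.\<close>

lemma rcis_cmod_Arg_add_multiple_2pi: "rcis (cmod z) (Arg z + 2 * pi * of_int k) = z"
proof -
  have "rcis (cmod z) (Arg z + 2 * pi * of_int k) = rcis (cmod z) (Arg z) * cis (2 * pi * of_int k)"
    by (simp only: rcis_def cis_mult mult.assoc)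
  then show ?thesis
    by (simp add: rcis_cmod_Arg)
qed

lemma abs_sin_half_le_sin_half:
  assumes "\<bar>t\<bar> \<le> \<alpha>" "\<alpha> \<le> pi"
  shows "\<bar>sin (t / 2)\<bar> \<le> sin (\<alpha> / 2)"
proof -
  have "\<bar>sin (t / 2)\<bar> = sin (\<bar>t\<bar> / 2)"
    using assms sin_ge_zero[of "t / 2"] sin_ge_zero[of "- t / 2"] by (cases "t \<ge> 0") auto
  also have "\<dots> \<le> sin (\<alpha> / 2)"
    using assms by (intro sin_monotone_2pi_le) auto
  finally show ?thesis .
qed

lemma norm_rcis_diff_le:
  assumes "\<bar>a - b\<bar> \<le> \<alpha>" "\<alpha> \<le> pi" "0 \<le> r"
  shows "cmod (rcis r a - rcis r b) \<le> 2 * sin (\<alpha> / 2) * r"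
proof -
  have "rcis r a - rcis r b = rcis r b * (cis (a - b) - 1)"
    by (simp add: rcis_def algebra_simps cis_mult)
  then have "cmod (rcis r a - rcis r b) = r * cmod (cis (a - b) - 1)"
    using assms(3) by (simp add: norm_mult)
  also have "\<dots> = r * (2 * \<bar>sin ((a - b) / 2)\<bar>)"
    using dist_exp_i_1[of "a - b"] by (simp add: cis_conv_exp mult.commute)
  also have "\<dots> \<le> r * (2 * sin (\<alpha> / 2))"
    using abs_sin_half_le_sin_half[OF assms(1,2)] assms(3) by (intro mult_left_mono) auto
  finally show ?thesis
    by (simp add: mult_ac)
qed

lemma sin_half_less_half:
  assumes "0 \<le> \<alpha>" "\<alpha> < pi / 3"
  shows "sin (\<alpha> / 2) < 1 / 2"
proof -
  have "sin (\<alpha> / 2) < sin (pi / 6)"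
    using assms by (intro sin_monotone_2pi) auto
  then show ?thesis by (simp add: sin_30)
qed

lemma cone_polar_form:
  assumes "w \<in> cone u \<gamma>1 \<gamma>2"
  obtains \<theta> where "\<gamma>1 \<le> \<theta>" "\<theta> < \<gamma>2" "w = u + rcis (dist u w) \<theta>"
proof -
  obtain k :: int where k: "\<gamma>1 \<le> Arg (w - u) + 2 * pi * of_int k"
    "Arg (w - u) + 2 * pi * of_int k < \<gamma>2"
    using assms by (auto simp: cone_def polar_angle_def angle_in_def)
  have "rcis (dist u w) (Arg (w - u) + 2 * pi * of_int k) = w - u"
    using rcis_cmod_Arg_add_multiple_2pi[of "w - u" k] by (simp add: dist_norm norm_minus_commute)
  with k show thesis
    by (intro that[of "Arg (w - u) + 2 * pi * of_int k"]) auto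
qed

lemma closure_sector_subset:
  fixes u v :: complex
  assumes v: "v = u + rcis d \<phi>" and "0 < d"
    and "\<gamma>1 \<le> \<phi>" "\<phi> < \<gamma>2" "max (\<phi> - \<gamma>1) (\<gamma>2 - \<phi>) \<le> \<alpha>" "\<alpha> \<le> pi"
  shows "closure (ball u d \<inter> cone u \<gamma>1 \<gamma>2) \<subseteq>
    {w. dist u w \<le> d \<and> dist (u + (dist u w / d) *\<^sub>R (v - u)) w \<le> 2 * sin (\<alpha> / 2) * dist u w}"
    (is "_ \<subseteq> ?S")
proof (rule closure_minimal)
  show "closed ?S"
    using \<open>0 < d\<close> by (intro closed_Collect_conj closed_Collect_le continuous_intros) auto
  show "ball u d \<inter> cone u \<gamma>1 \<gamma>2 \<subseteq> ?S"
  proof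
    fix w assume w: "w \<in> ball u d \<inter> cone u \<gamma>1 \<gamma>2"
    then obtain \<theta> where \<theta>: "\<gamma>1 \<le> \<theta>" "\<theta> < \<gamma>2" "w = u + rcis (dist u w) \<theta>"
      using cone_polar_form by blast
    have "(dist u w / d) *\<^sub>R (v - u) = rcis (dist u w) \<phi>"
      using \<open>0 < d\<close> by (simp add: v rcis_def scaleR_conv_of_real)
    then have "dist (u + (dist u w / d) *\<^sub>R (v - u)) w = cmod (rcis (dist u w) \<phi> - rcis (dist u w) \<theta>)"
      by (subst (2) \<theta>(3)) (simp add: dist_norm)
    also have "\<dots> \<le> 2 * sin (\<alpha> / 2) * dist u w"
      using assms \<theta> by (intro norm_rcis_diff_le) auto
    finally show "w \<in> ?S"
      using w by simp
  qed
qed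

lemma dist_ratio_le_of_near_radius:
  fixes u v w :: "'a::real_normed_vector"
  assumes "w \<noteq> u" "dist u w \<le> dist u v" "c < 1"
    and near: "dist (u + (dist u w / dist u v) *\<^sub>R (v - u)) w \<le> c * dist u w"
  shows "dist u w / (dist u v - dist v w) \<le> inverse (1 - c)"
proof -
  define r where "r = dist u w"
  define d where "d = dist u v"
  define p where "p = u + (r / d) *\<^sub>R (v - u)"
  have "0 < r" "r \<le> d"
    using assms by (auto simp: r_def d_def)
  have "v - p = (1 - r / d) *\<^sub>R (v - u)"
    by (simp add: p_def algebra_simps)
  moreover have "0 \<le> 1 - r / d"
    using \<open>0 < r\<close> \<open>r \<le> d\<close> by simp
  ultimately have "dist v p = (1 - r / d) * d"
    by (simp add: dist_norm d_def norm_minus_commute)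
  then have "dist v p = d - r"
    using \<open>0 < r\<close> \<open>r \<le> d\<close> by (simp add: algebra_simps)
  with near dist_triangle[of v w p] have "r * (1 - c) \<le> d - dist v w"
    by (simp add: p_def r_def d_def algebra_simps dist_commute)
  moreover have "0 < r * (1 - c)"
    using \<open>0 < r\<close> \<open>c < 1\<close> by simp
  ultimately have "r / (d - dist v w) \<le> r / (r * (1 - c))"
    using \<open>0 < r\<close> by (intro divide_left_mono) auto
  also have "\<dots> = inverse (1 - c)"
    using \<open>0 < r\<close> by (simp add: inverse_eq_divide)
  finally show ?thesis
    by (simp add: r_def d_def)
qed

theorem corollary4:
  fixes u v :: complex and \<gamma>1 \<gamma>2 \<phi> \<alpha> :: real
  assumes "u \<noteq> v"
    and "\<gamma>1 < \<gamma>2"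
    and "\<exists>k::int. \<phi> = polar_angle u v + 2 * pi * of_int k"
    and "\<gamma>1 \<le> \<phi>" and "\<phi> < \<gamma>2"
    and "\<alpha> = max (\<phi> - \<gamma>1) (\<gamma>2 - \<phi>)"
    and "\<alpha> < pi / 3"
  shows "\<forall>w \<in> closure (ball u (dist u v) \<inter> cone u \<gamma>1 \<gamma>2) - {u}.
           dist u w / (dist u v - dist v w) \<le> inverse (1 - 2 * sin (\<alpha> / 2))"
proof
  fix w assume w: "w \<in> closure (ball u (dist u v) \<inter> cone u \<gamma>1 \<gamma>2) - {u}"
  have "0 \<le> \<alpha>" "\<alpha> \<le> pi"
    using assms(4-7) pi_gt_zero by linarith+
  have "v = u + rcis (dist u v) \<phi>"
    using assms(3) rcis_cmod_Arg_add_multiple_2pi[of "v - u"]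
    by (auto simp: polar_angle_def dist_norm norm_minus_commute)
  then have "closure (ball u (dist u v) \<inter> cone u \<gamma>1 \<gamma>2) \<subseteq>
    {w. dist u w \<le> dist u v \<and>
        dist (u + (dist u w / dist u v) *\<^sub>R (v - u)) w \<le> 2 * sin (\<alpha> / 2) * dist u w}"
    using assms(1,4-6) \<open>\<alpha> \<le> pi\<close> by (intro closure_sector_subset) auto
  with w have "dist u w \<le> dist u v"
    and "dist (u + (dist u w / dist u v) *\<^sub>R (v - u)) w \<le> 2 * sin (\<alpha> / 2) * dist u w"
    by auto
  moreover have "2 * sin (\<alpha> / 2) < 1"
    using sin_half_less_half[OF \<open>0 \<le> \<alpha>\<close> assms(7)] by simp
  ultimately show "dist u w / (dist u v - dist v w) \<le> inverse (1 - 2 * sin (\<alpha> / 2))"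
    using w by (intro dist_ratio_le_of_near_radius) auto
qed

end
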